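(* For $\theta>0$ and an integer $n\ge1$, let $K_n(\theta)$ be a random variable with $$P\{K_n(\theta)=k\}=|S_n^k|\frac{\theta^k}{\theta_{(n)}},\quad k=1,\dots,n,$$ where $\theta_{(n)}=\theta(\theta+1)\cdots(\theta+n-1)$ and $|S_n^k|$ is the coefficient of $\theta^k$ in $\theta_{(n)}$, and let $M(t)=E[e^{tK_n(\theta)}]$. Consider the four regimes as $\theta\to\infty$: Case A: $n$ fixed; Case B: $n=n(\theta)\to\infty$ with $\theta/n\to\infty$; Case C: $n=n(\theta)\to\infty$ with $\theta/n\to c\in(0,\infty)$; Case D: $n=n(\theta)\to\infty$ with $\theta/n\to0$. Define $\alpha(\theta)=\log\theta,\ n\log\frac\theta n,\ \theta,\ \theta\log\frac n\theta$ and $\beta(\theta)=\log\theta,\ \log\frac\theta n,\ \frac\theta n,\ 1$ in Cases A, B, C, D respectively. Then for every $t\in\mathbb R$, $$\Lambda(t)=\lim_{\theta\to\infty}\frac{1}{\alpha(\theta)}\log M(\beta(\theta)t)$$ exists and equals, in Cases A, B, C, D respectively, $$\Lambda_1(t)=\begin{cases}nt,&t>-1,\\ (t+1)-n,&\text{else},\end{cases}\qquad \Lambda_2(t)=\begin{cases}t,&t>-1,\\ -1,&\text{else},\end{cases}$$ $$\Lambda_3(t)=\frac1c\Big\{[c\log c-(1+c)\log(1+c)]+[(1+ce^{ct})\log(1+ce^{ct})-ce^{ct}\log(ce^{ct})]\Big\},\qquad \Lambda_4(t)=e^t-1.$$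
   Context: $K_n(\theta)$ is the number of distinct alleles in a random sample of size $n$ from a $PD(\theta)$ population (Ewens sampling formula). *)

theory Defs
  imports "HOL-Analysis.Analysis" "HOL-Combinatorics.Stirling"
begin

text \<open>|S_n^k| is the unsigned Stirling number of the first kind (library: stirling n k),
  i.e. the coefficient of x^k in the rising factorial pochhammer x n.\<close>
definition K_pmf :: "nat \<Rightarrow> real \<Rightarrow> nat \<Rightarrow> real" where
  "K_pmf n \<theta> k = real (stirling n k) * \<theta> ^ k / pochhammer \<theta> n"

definition mgf_K :: "nat \<Rightarrow> real \<Rightarrow> real \<Rightarrow> real" where
  "mgf_K n \<theta> t = (\<Sum>k\<in>{1..n}. K_pmf n \<theta> k * exp (t * real k))"

definition Lambda1 :: "nat \<Rightarrow> real \<Rightarrow> real" where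
  "Lambda1 n t = (if t > -1 then real n * t else (t + 1) - real n)"

definition Lambda2 :: "real \<Rightarrow> real" where
  "Lambda2 t = (if t > -1 then t else -1)"

definition Lambda3 :: "real \<Rightarrow> real \<Rightarrow> real" where
  "Lambda3 c t = (1 / c) *
     ((c * ln c - (1 + c) * ln (1 + c)) +
      ((1 + c * exp (c * t)) * ln (1 + c * exp (c * t)) - c * exp (c * t) * ln (c * exp (c * t))))"

definition Lambda4 :: "real \<Rightarrow> real" where
  "Lambda4 t = exp t - 1"

end

theory Submission
  imports Defs "HOL-Real_Asymp.Real_Asymp"
begin

text \<open>Since \<open>|S_n^k|\<close> are the coefficients of the rising factorial, \<open>M(u)\<close> is the ratio
  \<open>(\<theta>e^u)_(n) / \<theta>_(n)\<close>. Comparing \<open>ln b_(n) = \<Sum>j<n. ln (b + j)\<close> with the integral of \<open>ln\<close>,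
  whose antiderivative is \<open>y ln y - y\<close>, gives \<open>ln M(u) = \<theta> \<Phi>(e^u, n/\<theta>)\<close> up to an error
  \<open>ln (1 + n/(\<theta>e^u)) + ln (1 + n/\<theta>)\<close>, where \<open>\<Phi>\<close> is \<open>ewens_lmgf\<close> below. In Cases B, C and D the error
  is negligible against \<open>\<alpha>(\<theta>)\<close> and the limit is an asymptotic evaluation of \<open>\<Phi>\<close>. In Case A
  the error is of the same order as \<open>ln \<theta>\<close>, so there the \<open>n\<close> logarithms are evaluated
  one at a time: \<open>ln (\<theta>^(1+t) + j) / ln \<theta>\<close> tends to \<open>1 + t\<close> for \<open>j = 0\<close> and to
  \<open>max (1 + t) 0\<close> for \<open>j > 0\<close>.\<close>

lemma mgf_K_eq_pochhammer_ratio: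
  assumes "\<theta> > 0" "n \<ge> 1"
  shows "mgf_K n \<theta> u = pochhammer (\<theta> * exp u) n / pochhammer \<theta> n"
proof -
  have "mgf_K n \<theta> u = (\<Sum>k\<in>{1..n}. real (stirling n k) * (\<theta> * exp u) ^ k) / pochhammer \<theta> n"
    unfolding mgf_K_def K_pmf_def
    by (simp add: sum_divide_distrib power_mult_distrib mult.commute[of u] exp_of_nat_mult mult.assoc)
  also have "(\<Sum>k\<in>{1..n}. real (stirling n k) * (\<theta> * exp u) ^ k)
      = (\<Sum>k\<le>n. real (stirling n k) * (\<theta> * exp u) ^ k)"
  proof -
    have "{..n} = insert 0 {1..n}" by auto
    moreover have "stirling n 0 = 0" using assms(2) by (cases n) auto
    ultimately show ?thesis by simp
  qed
  also have "\<dots> = pochhammer (\<theta> * exp u) n" by (rule stirling_pochhammer)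
  finally show ?thesis .
qed

lemma ln_pochhammer: "b > 0 \<Longrightarrow> ln (pochhammer b n) = (\<Sum>j<n. ln (b + real j))"
  by (simp add: pochhammer_prod ln_prod atLeast0LessThan)

lemma ln_mgf_K_eq_sum:
  assumes "\<theta> > 0" "n \<ge> 1"
  shows "ln (mgf_K n \<theta> u) = (\<Sum>j<n. ln (\<theta> * exp u + real j)) - (\<Sum>j<n. ln (\<theta> + real j))"
  using assms pochhammer_pos[of "\<theta> * exp u" n] pochhammer_pos[of \<theta> n]
  by (simp add: mgf_K_eq_pochhammer_ratio ln_div ln_pochhammer)

subsection \<open>Comparison of \<open>\<Sum> ln (b + j)\<close> with an integral\<close>

definition ln_antideriv :: "real \<Rightarrow> real" where
  "ln_antideriv y = y * ln y - y"

lemma ln_antideriv_diff_bounds: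
  assumes "y > 0"
  shows "ln y \<le> ln_antideriv (y + 1) - ln_antideriv y"
    and "ln_antideriv (y + 1) - ln_antideriv y \<le> ln (y + 1)"
proof -
  have "ln (y / (y + 1)) \<le> y / (y + 1) - 1" using assms by (intro ln_le_minus_one) auto
  then have "(y + 1) * (ln (y + 1) - ln y) \<ge> 1" using assms by (simp add: ln_div field_simps)
  then show "ln y \<le> ln_antideriv (y + 1) - ln_antideriv y"
    unfolding ln_antideriv_def by (simp add: algebra_simps)
  have "ln ((y + 1) / y) \<le> (y + 1) / y - 1" using assms by (intro ln_le_minus_one) auto
  then have "y * (ln (y + 1) - ln y) \<le> 1" using assms by (simp add: ln_div field_simps)
  then show "ln_antideriv (y + 1) - ln_antideriv y \<le> ln (y + 1)"
    unfolding ln_antideriv_def by (simp add: algebra_simps)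
qed

lemma sum_ln_shifted_bounds:
  assumes "b > 0"
  shows "ln_antideriv (b + real n) - ln_antideriv b - ln (1 + real n / b) \<le> (\<Sum>j<n. ln (b + real j))"
    and "(\<Sum>j<n. ln (b + real j)) \<le> ln_antideriv (b + real n) - ln_antideriv b"
proof -
  let ?G = "\<lambda>j. ln_antideriv (b + real j)" and ?l = "\<lambda>j. ln (b + real j)"
  have G_telescope: "(\<Sum>j<n. ?G (Suc j) - ?G j) = ?G n - ?G 0"
    by (rule sum_lessThan_telescope)
  have l_telescope: "(\<Sum>j<n. ?l (Suc j) - ?l j) = ?l n - ?l 0"
    by (rule sum_lessThan_telescope)
  have ln_ratio: "ln (b + real n) - ln b = ln (1 + real n / b)"
  proof -
    have "1 + real n / b = (b + real n) / b" using assms by (simp add: field_simps)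
    then show ?thesis using assms by (simp add: ln_div)
  qed
  have "(\<Sum>j<n. ?l j) \<le> (\<Sum>j<n. ?G (Suc j) - ?G j)"
  proof (rule sum_mono)
    fix j
    show "?l j \<le> ?G (Suc j) - ?G j"
      using ln_antideriv_diff_bounds(1)[of "b + real j"] assms by (simp add: add_ac)
  qed
  then show "(\<Sum>j<n. ?l j) \<le> ln_antideriv (b + real n) - ln_antideriv b"
    using G_telescope by simp
  have "(\<Sum>j<n. (?G (Suc j) - ?G j) - (?l (Suc j) - ?l j)) \<le> (\<Sum>j<n. ?l j)"
  proof (rule sum_mono)
    fix j
    show "(?G (Suc j) - ?G j) - (?l (Suc j) - ?l j) \<le> ?l j"
      using ln_antideriv_diff_bounds(2)[of "b + real j"] assms by (simp add: add_ac)
  qed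
  then show "ln_antideriv (b + real n) - ln_antideriv b - ln (1 + real n / b) \<le> (\<Sum>j<n. ?l j)"
    using G_telescope l_telescope ln_ratio by (simp add: sum_subtractf)
qed

subsection \<open>The leading term of \<open>ln M\<close>\<close>

definition ewens_lmgf :: "real \<Rightarrow> real \<Rightarrow> real" where
  "ewens_lmgf s m = (s + m) * ln (s + m) - s * ln s - (1 + m) * ln (1 + m)"

lemma ln_antideriv_scale_diff:
  assumes "\<theta> > 0" "s > 0" "m \<ge> 0"
  shows "ln_antideriv (\<theta> * s + \<theta> * m) - ln_antideriv (\<theta> * s)
           - (ln_antideriv (\<theta> + \<theta> * m) - ln_antideriv \<theta>) = \<theta> * ewens_lmgf s m"
proof -
  have "\<theta> * s + \<theta> * m = \<theta> * (s + m)" "\<theta> + \<theta> * m = \<theta> * (1 + m)"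
    by (simp_all add: algebra_simps)
  moreover have "ln (\<theta> * (s + m)) = ln \<theta> + ln (s + m)" "ln (\<theta> * s) = ln \<theta> + ln s"
    "ln (\<theta> * (1 + m)) = ln \<theta> + ln (1 + m)"
    using assms by (simp_all add: ln_mult)
  ultimately show ?thesis unfolding ln_antideriv_def ewens_lmgf_def by (simp add: algebra_simps)
qed

lemma ln_mgf_K_approx:
  assumes "\<theta> > 0" "n \<ge> 1"
  shows "\<bar>ln (mgf_K n \<theta> u) - \<theta> * ewens_lmgf (exp u) (real n / \<theta>)\<bar>
           \<le> ln (1 + real n / (\<theta> * exp u)) + ln (1 + real n / \<theta>)"
proof -
  have pos: "\<theta> * exp u > 0" using assms by simp
  have "\<theta> * (real n / \<theta>) = real n" using assms by simp
  then have "ln_antideriv (\<theta> * exp u + real n) - ln_antideriv (\<theta> * exp u)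
      - (ln_antideriv (\<theta> + real n) - ln_antideriv \<theta>) = \<theta> * ewens_lmgf (exp u) (real n / \<theta>)"
    using ln_antideriv_scale_diff[OF assms(1) exp_gt_zero, of "real n / \<theta>" u] assms by simp
  moreover have "ln (1 + real n / (\<theta> * exp u)) \<ge> 0" "ln (1 + real n / \<theta>) \<ge> 0"
    using assms by simp_all
  ultimately show ?thesis
    using sum_ln_shifted_bounds[OF pos, of n] sum_ln_shifted_bounds[OF assms(1), of n]
    unfolding ln_mgf_K_eq_sum[OF assms] by linarith
qed

lemma tendsto_ln_mgf_K_div:
  fixes nn :: "real \<Rightarrow> nat" and u \<alpha> :: "real \<Rightarrow> real"
  assumes n_pos: "eventually (\<lambda>\<theta>. nn \<theta> \<ge> 1) at_top"
    and \<alpha>_pos: "eventually (\<lambda>\<theta>. \<alpha> \<theta> > 0) at_top"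
    and main: "((\<lambda>\<theta>. \<theta> * ewens_lmgf (exp (u \<theta>)) (real (nn \<theta>) / \<theta>) / \<alpha> \<theta>) \<longlongrightarrow> L) at_top"
    and error: "((\<lambda>\<theta>. (ln (1 + real (nn \<theta>) / (\<theta> * exp (u \<theta>))) + ln (1 + real (nn \<theta>) / \<theta>)) / \<alpha> \<theta>)
                  \<longlongrightarrow> 0) at_top"
  shows "((\<lambda>\<theta>. ln (mgf_K (nn \<theta>) \<theta> (u \<theta>)) / \<alpha> \<theta>) \<longlongrightarrow> L) at_top"
proof -
  let ?P = "\<lambda>\<theta>. \<theta> * ewens_lmgf (exp (u \<theta>)) (real (nn \<theta>) / \<theta>) / \<alpha> \<theta>"
  have "((\<lambda>\<theta>. ln (mgf_K (nn \<theta>) \<theta> (u \<theta>)) / \<alpha> \<theta> - ?P \<theta>) \<longlongrightarrow> 0) at_top"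
  proof (rule Lim_null_comparison[OF _ error])
    show "eventually (\<lambda>\<theta>. norm (ln (mgf_K (nn \<theta>) \<theta> (u \<theta>)) / \<alpha> \<theta> - ?P \<theta>)
        \<le> (ln (1 + real (nn \<theta>) / (\<theta> * exp (u \<theta>))) + ln (1 + real (nn \<theta>) / \<theta>)) / \<alpha> \<theta>) at_top"
      using n_pos \<alpha>_pos eventually_gt_at_top[of 0]
    proof eventually_elim
      case (elim \<theta>)
      then show ?case
        using ln_mgf_K_approx[of \<theta> "nn \<theta>" "u \<theta>"]
        by (simp add: diff_divide_distrib[symmetric] divide_right_mono)
    qed
  qed
  from tendsto_add[OF this main] show ?thesis by simp
qed

lemma ln_powr_add_div_ln_tendsto:
  fixes a c :: real
  assumes "c > 0"
  shows "((\<lambda>x. ln (x powr a + c) / ln x) \<longlongrightarrow> max a 0) at_top"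
proof -
  consider "a > 0" | "a = 0" | "a < 0" by linarith
  then show ?thesis
  proof cases
    case 2
    have "((\<lambda>x::real. ln (1 + c) / ln x) \<longlongrightarrow> 0) at_top" by real_asymp
    moreover have "eventually (\<lambda>x::real. ln (1 + c) / ln x = ln (x powr a + c) / ln x) at_top"
      using eventually_gt_at_top[of 1] by eventually_elim (simp add: 2 add.commute)
    ultimately show ?thesis using 2 by (simp add: tendsto_cong)
  qed (use assms in \<open>real_asymp+\<close>)
qed

lemma ln_mgf_K_tendsto_case_A:
  assumes "n \<ge> 1"
  shows "((\<lambda>\<theta>. ln (mgf_K n \<theta> (ln \<theta> * t)) / ln \<theta>) \<longlongrightarrow> Lambda1 n t) at_top"
proof -
  obtain k where k: "n = Suc k" using assms by (cases n) auto
  define f where "f j \<theta> = ln (\<theta> powr (1 + t) + real j) / ln \<theta> - ln (\<theta> powr 1 + real j) / ln \<theta>"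
    for j \<theta>
  have "eventually (\<lambda>\<theta>. f 0 \<theta> = t) at_top"
    using eventually_gt_at_top[of 1] by eventually_elim (simp add: f_def ln_powr field_simps)
  then have "(f 0 \<longlongrightarrow> t) at_top" by (simp add: tendsto_eventually)
  moreover have "(f (Suc j) \<longlongrightarrow> max (1 + t) 0 - max 1 0) at_top" for j
    unfolding f_def by (intro tendsto_diff ln_powr_add_div_ln_tendsto) auto
  ultimately have "((\<lambda>\<theta>. f 0 \<theta> + (\<Sum>j<k. f (Suc j) \<theta>))
      \<longlongrightarrow> t + (\<Sum>j<k. max (1 + t) 0 - max 1 0)) at_top"
    by (intro tendsto_add tendsto_sum)
  moreover have "t + (\<Sum>j<k. max (1 + t) 0 - max 1 0) = Lambda1 n t"
    unfolding Lambda1_def k by (auto simp: max_def algebra_simps)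
  moreover have "eventually (\<lambda>\<theta>. f 0 \<theta> + (\<Sum>j<k. f (Suc j) \<theta>)
      = ln (mgf_K n \<theta> (ln \<theta> * t)) / ln \<theta>) at_top"
    using eventually_gt_at_top[of 1]
  proof eventually_elim
    case (elim \<theta>)
    have "\<theta> * exp (ln \<theta> * t) = \<theta> powr (1 + t)"
      using elim by (simp add: powr_def exp_add algebra_simps)
    then have "(\<Sum>j<n. f j \<theta>) = ln (mgf_K n \<theta> (ln \<theta> * t)) / ln \<theta>"
      using ln_mgf_K_eq_sum[of \<theta> n "ln \<theta> * t"] elim assms
      by (simp add: f_def sum_divide_distrib sum_subtractf diff_divide_distrib)
    then show ?case unfolding k sum.lessThan_Suc_shift .
  qed
  ultimately show ?thesis by (simp add: tendsto_cong)
qed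

lemma ewens_lmgf_proportional:
  assumes "s > 0" "x > 0" "L \<noteq> 0"
  shows "ewens_lmgf s (x * s) / (x * s * L)
    = ln s / L + ((1 / x + 1) * ln (1 + x) - (1 / (x * s) + 1) * ln (1 + x * s)) / L"
proof -
  have "s + x * s = s * (1 + x)" by (simp add: algebra_simps)
  then have "ln (s + x * s) = ln s + ln (1 + x)" using assms by (simp add: ln_mult)
  then show ?thesis unfolding ewens_lmgf_def using assms by (simp add: field_simps)
qed

text \<open>With \<open>L = ln (\<theta>/n)\<close> the leading term \<open>\<theta> \<Phi>(e^(Lt), n/\<theta>) / (n L)\<close> of Case B depends on
  \<open>L\<close> alone.\<close>

lemma ewens_lmgf_exp_scaling_tendsto:
  "((\<lambda>L. ewens_lmgf (exp (L * t)) (exp (- L)) / (exp (- L) * L)) \<longlongrightarrow> Lambda2 t) at_top"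
proof (cases "t > -1")
  case True
  define e where "e = 1 + t"
  have e: "e > 0" using True by (simp add: e_def)
  define q where "q y = (1 / y + 1) * ln (1 + y)" for y :: real
  have q_lim: "(q \<longlongrightarrow> 1) (at_right 0)" unfolding q_def by real_asymp
  have exp_lim: "filterlim (\<lambda>L::real. exp (- (a * L))) (at_right 0) at_top" if "a > 0" for a
    using that by real_asymp
  have "((\<lambda>L. t + (q (exp (- (e * L))) - q (exp (- (1 * L)))) * inverse L)
      \<longlongrightarrow> t + (1 - 1) * 0) at_top"
    by (intro tendsto_intros filterlim_compose[OF q_lim exp_lim] e
        tendsto_inverse_0_at_top filterlim_ident) simp
  moreover have "eventually (\<lambda>L. t + (q (exp (- (e * L))) - q (exp (- (1 * L)))) * inverse L
      = ewens_lmgf (exp (L * t)) (exp (- L)) / (exp (- L) * L)) at_top"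
    using eventually_gt_at_top[of 0]
  proof eventually_elim
    case (elim L)
    have split: "exp (- (e * L)) * exp (L * t) = exp (- L)"
      by (simp add: mult_exp_exp e_def algebra_simps)
    show ?case
      using ewens_lmgf_proportional[of "exp (L * t)" "exp (- (e * L))" L] elim
      by (simp add: split q_def divide_inverse)
  qed
  ultimately show ?thesis using True by (simp add: Lambda2_def tendsto_cong)
next
  case False
  then consider "t = -1" | "t < -1" by linarith
  then show ?thesis
  proof cases
    case 1
    have "((\<lambda>L::real. ewens_lmgf (exp (- L)) (exp (- L)) / (exp (- L) * L)) \<longlongrightarrow> - 1) at_top"
      unfolding ewens_lmgf_def by real_asymp
    then show ?thesis using 1 by (simp add: Lambda2_def)
  next
    case 2
    define e where "e = - 1 - t"
    have e: "e > 0" using 2 by (simp add: e_def)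
    have split: "exp (L * t) = exp (- (e * L)) * exp (- L)" for L
      by (simp add: mult_exp_exp e_def algebra_simps)
    have "((\<lambda>L::real. ewens_lmgf (exp (- (e * L)) * exp (- L)) (exp (- L)) / (exp (- L) * L))
        \<longlongrightarrow> - 1) at_top"
      using e unfolding ewens_lmgf_def by real_asymp
    then show ?thesis using 2 by (simp add: Lambda2_def split)
  qed
qed

lemma ln_one_plus_exp_le: "ln (1 + exp z) \<le> ln 2 + \<bar>z :: real\<bar>"
proof -
  have "1 + exp z \<le> 2 * exp \<bar>z\<bar>"
  proof -
    have "1 \<le> exp \<bar>z\<bar>" using exp_ge_add_one_self[of "\<bar>z\<bar>"] by simp
    moreover have "exp z \<le> exp \<bar>z\<bar>" by simp
    ultimately show ?thesis by linarith
  qed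
  then have "ln (1 + exp z) \<le> ln (2 * exp \<bar>z\<bar>)" by (simp add: add_pos_pos)
  then show ?thesis by (simp add: ln_mult)
qed

lemma ln_one_plus_exp_sum_le:
  fixes l t :: real
  assumes l: "l \<ge> 1"
  shows "ln (1 + exp (- ((1 + t) * l))) + ln (1 + exp (- l)) \<le> (2 * ln 2 + \<bar>1 + t\<bar> + 1) * l"
proof -
  have "ln (1 + exp (- ((1 + t) * l))) \<le> ln 2 + \<bar>1 + t\<bar> * l"
    using ln_one_plus_exp_le[of "- ((1 + t) * l)"] l by (simp add: abs_mult)
  moreover have "ln (1 + exp (- l)) \<le> ln 2 + l" using ln_one_plus_exp_le[of "- l"] l by simp
  moreover have "2 * ln 2 \<le> 2 * ln 2 * l" using l by (simp add: mult_le_cancel_left1)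
  moreover have "(2 * ln 2 + \<bar>1 + t\<bar> + 1) * l = 2 * ln 2 * l + \<bar>1 + t\<bar> * l + l"
    by (simp add: algebra_simps)
  ultimately show ?thesis by linarith
qed

lemma ln_mgf_K_tendsto_case_B:
  fixes nn :: "real \<Rightarrow> nat"
  assumes nn: "filterlim nn at_top at_top"
    and lim: "filterlim (\<lambda>\<theta>. \<theta> / real (nn \<theta>)) at_top at_top"
  shows "((\<lambda>\<theta>. ln (mgf_K (nn \<theta>) \<theta> (ln (\<theta> / real (nn \<theta>)) * t))
              / (real (nn \<theta>) * ln (\<theta> / real (nn \<theta>)))) \<longlongrightarrow> Lambda2 t) at_top"
proof (rule tendsto_ln_mgf_K_div)
  define L where "L \<theta> = ln (\<theta> / real (nn \<theta>))" for \<theta>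
  have L_top: "filterlim L at_top at_top"
    unfolding L_def[abs_def] by (rule filterlim_compose[OF ln_at_top lim])
  show n_pos: "eventually (\<lambda>\<theta>. nn \<theta> \<ge> 1) at_top" using nn by (simp add: filterlim_at_top)
  have "eventually (\<lambda>\<theta>. L \<theta> \<ge> 1) at_top" using L_top by (simp add: filterlim_at_top)
  then have ev: "eventually (\<lambda>\<theta>. nn \<theta> \<ge> 1 \<and> \<theta> > 0 \<and> L \<theta> \<ge> 1) at_top"
    using n_pos eventually_gt_at_top[of 0] by eventually_elim simp
  then show "eventually (\<lambda>\<theta>. real (nn \<theta>) * ln (\<theta> / real (nn \<theta>)) > 0) at_top"
    by eventually_elim (auto simp: L_def[symmetric])
  have "eventually (\<lambda>\<theta>. ewens_lmgf (exp (L \<theta> * t)) (exp (- L \<theta>)) / (exp (- L \<theta>) * L \<theta>)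
      = \<theta> * ewens_lmgf (exp (ln (\<theta> / real (nn \<theta>)) * t)) (real (nn \<theta>) / \<theta>)
        / (real (nn \<theta>) * ln (\<theta> / real (nn \<theta>)))) at_top"
    using ev by eventually_elim (simp add: L_def exp_minus)
  with filterlim_compose[OF ewens_lmgf_exp_scaling_tendsto[of t] L_top]
  show "((\<lambda>\<theta>. \<theta> * ewens_lmgf (exp (ln (\<theta> / real (nn \<theta>)) * t)) (real (nn \<theta>) / \<theta>)
      / (real (nn \<theta>) * ln (\<theta> / real (nn \<theta>)))) \<longlongrightarrow> Lambda2 t) at_top"
    by (rule Lim_transform_eventually)
  have ratio: "eventually (\<lambda>\<theta>. nn \<theta> \<ge> 1 \<and> \<theta> > 0 \<and> L \<theta> \<ge> 1 \<and> exp (- L \<theta>) = real (nn \<theta>) / \<theta>) at_top"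
    using ev by eventually_elim (simp add: L_def exp_minus)
  define K where "K = 2 * ln 2 + \<bar>1 + t\<bar> + 1"
  have "((\<lambda>\<theta>. K * inverse (real (nn \<theta>))) \<longlongrightarrow> K * 0) at_top"
    by (intro tendsto_intros tendsto_inverse_0_at_top
        filterlim_compose[OF filterlim_real_sequentially nn])
  then have K_over_n: "((\<lambda>\<theta>. K * inverse (real (nn \<theta>))) \<longlongrightarrow> 0) at_top" by simp
  show "((\<lambda>\<theta>. (ln (1 + real (nn \<theta>) / (\<theta> * exp (ln (\<theta> / real (nn \<theta>)) * t)))
      + ln (1 + real (nn \<theta>) / \<theta>)) / (real (nn \<theta>) * ln (\<theta> / real (nn \<theta>)))) \<longlongrightarrow> 0) at_top"
  proof (rule Lim_null_comparison[OF _ K_over_n])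
    show "eventually (\<lambda>\<theta>. norm ((ln (1 + real (nn \<theta>) / (\<theta> * exp (ln (\<theta> / real (nn \<theta>)) * t)))
      + ln (1 + real (nn \<theta>) / \<theta>)) / (real (nn \<theta>) * ln (\<theta> / real (nn \<theta>))))
      \<le> K * inverse (real (nn \<theta>))) at_top"
      using ratio
    proof eventually_elim
      case (elim \<theta>)
      define l where "l = L \<theta>"
      have l: "l \<ge> 1" and n: "real (nn \<theta>) \<ge> 1" using elim by (simp_all add: l_def)
      have "exp (- ((1 + t) * l)) = exp (- l) / exp (l * t)"
        by (simp add: exp_diff[symmetric] algebra_simps)
      with elim have "real (nn \<theta>) / (\<theta> * exp (l * t)) = exp (- ((1 + t) * l))"
        by (simp add: l_def)
      moreover have "real (nn \<theta>) / \<theta> = exp (- l)" using elim by (simp add: l_def)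
      moreover have "ln (1 + exp (- ((1 + t) * l))) + ln (1 + exp (- l)) \<le> K * l"
        using ln_one_plus_exp_sum_le[OF l, of t] by (simp add: K_def)
      ultimately have "ln (1 + real (nn \<theta>) / (\<theta> * exp (l * t))) + ln (1 + real (nn \<theta>) / \<theta>)
          \<le> K * l" by simp
      moreover have "0 \<le> ln (1 + real (nn \<theta>) / (\<theta> * exp (l * t))) + ln (1 + real (nn \<theta>) / \<theta>)"
        using elim by simp
      ultimately show ?case
        using l n by (simp add: l_def[symmetric] L_def[symmetric] divide_le_eq field_simps)
    qed
  qed
qed

lemma Lambda3_eq_ewens_lmgf:
  assumes c: "c > 0"
  shows "Lambda3 c t = ewens_lmgf (exp (c * t)) (1 / c)"
proof -
  define E where "E = exp (c * t)"
  have E: "E > 0" by (simp add: E_def)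
  have "E + 1 / c = (1 + c * E) / c" "1 + 1 / c = (1 + c) / c" using c by (simp_all add: field_simps)
  moreover have "1 + c * E > 0" "1 + c > 0" using c E by (simp_all add: add_pos_pos)
  ultimately have ln_1: "ln (E + 1 / c) = ln (1 + c * E) - ln c"
    and ln_2: "ln (1 + 1 / c) = ln (1 + c) - ln c"
    using c by (simp_all add: ln_div)
  have ln_3: "ln E = c * t" and ln_4: "ln (c * E) = ln c + c * t"
    using c E by (simp_all add: E_def ln_mult)
  show ?thesis
    unfolding ewens_lmgf_def Lambda3_def E_def[symmetric] ln_1 ln_2 ln_3 ln_4
    using c by (simp add: field_simps)
qed

lemma ln_mgf_K_tendsto_case_C:
  fixes nn :: "real \<Rightarrow> nat"
  assumes c: "c > 0" and nn: "filterlim nn at_top at_top"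
    and lim: "((\<lambda>\<theta>. \<theta> / real (nn \<theta>)) \<longlongrightarrow> c) at_top"
  shows "((\<lambda>\<theta>. ln (mgf_K (nn \<theta>) \<theta> (\<theta> / real (nn \<theta>) * t)) / \<theta>) \<longlongrightarrow> Lambda3 c t) at_top"
proof (rule tendsto_ln_mgf_K_div)
  define u where "u \<theta> = \<theta> / real (nn \<theta>) * t" for \<theta>
  define m where "m \<theta> = real (nn \<theta>) / \<theta>" for \<theta>
  have u_lim: "(u \<longlongrightarrow> c * t) at_top" unfolding u_def by (intro tendsto_intros lim)
  have "((\<lambda>\<theta>. inverse (\<theta> / real (nn \<theta>))) \<longlongrightarrow> inverse c) at_top"
    using c by (intro tendsto_intros lim) auto
  then have m_lim: "(m \<longlongrightarrow> 1 / c) at_top" by (simp add: m_def[abs_def] inverse_eq_divide)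
  have "((\<lambda>\<theta>. ewens_lmgf (exp (u \<theta>)) (m \<theta>)) \<longlongrightarrow> ewens_lmgf (exp (c * t)) (1 / c)) at_top"
  proof -
    have "exp (c * t) + 1 / c > 0" "1 + 1 / c > 0" using c by (simp_all add: add_pos_pos)
    then show ?thesis unfolding ewens_lmgf_def using c by (intro tendsto_intros u_lim m_lim) auto
  qed
  moreover have "eventually (\<lambda>\<theta>. ewens_lmgf (exp (u \<theta>)) (m \<theta>)
      = \<theta> * ewens_lmgf (exp (u \<theta>)) (real (nn \<theta>) / \<theta>) / \<theta>) at_top"
    using eventually_gt_at_top[of 0] by eventually_elim (simp add: m_def)
  ultimately show "((\<lambda>\<theta>. \<theta> * ewens_lmgf (exp (u \<theta>)) (real (nn \<theta>) / \<theta>) / \<theta>) \<longlongrightarrow> Lambda3 c t) at_top"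
    using Lambda3_eq_ewens_lmgf[OF c] by (simp add: tendsto_cong)
  have "((\<lambda>\<theta>. (ln (1 + m \<theta> / exp (u \<theta>)) + ln (1 + m \<theta>)) * inverse \<theta>)
      \<longlongrightarrow> (ln (1 + (1 / c) / exp (c * t)) + ln (1 + 1 / c)) * 0) at_top"
  proof -
    have "1 + 1 / (c * exp (c * t)) > 0" "1 + 1 / c > 0" using c by (simp_all add: add_pos_pos)
    then show ?thesis
      using c by (intro tendsto_intros u_lim m_lim tendsto_inverse_0_at_top filterlim_ident) auto
  qed
  then show "((\<lambda>\<theta>. (ln (1 + real (nn \<theta>) / (\<theta> * exp (u \<theta>))) + ln (1 + real (nn \<theta>) / \<theta>)) / \<theta>)
      \<longlongrightarrow> 0) at_top"
    by (simp add: m_def divide_inverse mult.commute mult.left_commute)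
  show "eventually (\<lambda>\<theta>. nn \<theta> \<ge> 1) at_top" using nn by (simp add: filterlim_at_top)
  show "eventually (\<lambda>\<theta>::real. \<theta> > 0) at_top" by (rule eventually_gt_at_top)
qed

lemma ln_mgf_K_tendsto_case_D:
  fixes nn :: "real \<Rightarrow> nat"
  assumes nn: "filterlim nn at_top at_top"
    and lim: "((\<lambda>\<theta>. \<theta> / real (nn \<theta>)) \<longlongrightarrow> 0) at_top"
  shows "((\<lambda>\<theta>. ln (mgf_K (nn \<theta>) \<theta> t) / (\<theta> * ln (real (nn \<theta>) / \<theta>))) \<longlongrightarrow> Lambda4 t) at_top"
proof (rule tendsto_ln_mgf_K_div)
  define m where "m \<theta> = real (nn \<theta>) / \<theta>" for \<theta>
  show n_pos: "eventually (\<lambda>\<theta>. nn \<theta> \<ge> 1) at_top" using nn by (simp add: filterlim_at_top)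
  then have "eventually (\<lambda>\<theta>. \<theta> / real (nn \<theta>) > 0) at_top"
    using eventually_gt_at_top[of 0] by eventually_elim auto
  from filterlim_inverse_at_top[OF lim this]
  have m_top: "filterlim m at_top at_top" by (simp add: m_def[abs_def])
  have m_gt_1: "eventually (\<lambda>\<theta>. m \<theta> > 1) at_top" using m_top by (simp add: filterlim_at_top_dense)
  show "eventually (\<lambda>\<theta>. \<theta> * ln (real (nn \<theta>) / \<theta>) > 0) at_top"
    using m_gt_1 eventually_gt_at_top[of 0] by eventually_elim (simp add: m_def)
  have "((\<lambda>m. ewens_lmgf (exp t) m / ln m) \<longlongrightarrow> exp t - 1) at_top"
    unfolding ewens_lmgf_def by real_asymp
  from filterlim_compose[OF this m_top]
  have "((\<lambda>\<theta>. ewens_lmgf (exp t) (m \<theta>) / ln (m \<theta>)) \<longlongrightarrow> Lambda4 t) at_top"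
    by (simp add: Lambda4_def)
  moreover have "eventually (\<lambda>\<theta>. ewens_lmgf (exp t) (m \<theta>) / ln (m \<theta>)
      = \<theta> * ewens_lmgf (exp t) (real (nn \<theta>) / \<theta>) / (\<theta> * ln (real (nn \<theta>) / \<theta>))) at_top"
    using eventually_gt_at_top[of 0] by eventually_elim (simp add: m_def)
  ultimately show "((\<lambda>\<theta>. \<theta> * ewens_lmgf (exp t) (real (nn \<theta>) / \<theta>) / (\<theta> * ln (real (nn \<theta>) / \<theta>)))
      \<longlongrightarrow> Lambda4 t) at_top"
    by (simp add: tendsto_cong)
  have ln_ratio: "((\<lambda>m::real. ln (1 + m / s) / ln m) \<longlongrightarrow> 1) at_top" if "s > 0" for s
    using that by real_asymp
  have "((\<lambda>\<theta>. (ln (1 + m \<theta> / exp t) / ln (m \<theta>) + ln (1 + m \<theta> / 1) / ln (m \<theta>)) * inverse \<theta>)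
      \<longlongrightarrow> (1 + 1) * 0) at_top"
    by (intro tendsto_intros filterlim_compose[OF ln_ratio m_top]
        tendsto_inverse_0_at_top filterlim_ident) auto
  moreover have "eventually (\<lambda>\<theta>. (ln (1 + m \<theta> / exp t) / ln (m \<theta>) + ln (1 + m \<theta> / 1) / ln (m \<theta>)) * inverse \<theta>
      = (ln (1 + real (nn \<theta>) / (\<theta> * exp t)) + ln (1 + real (nn \<theta>) / \<theta>)) / (\<theta> * ln (real (nn \<theta>) / \<theta>))) at_top"
    using eventually_gt_at_top[of 0] m_gt_1
  proof eventually_elim
    case (elim \<theta>)
    then have "ln (m \<theta>) \<noteq> 0" by simp
    with elim show ?case
      by (simp add: m_def divide_divide_eq_left add_divide_distrib divide_inverse
          distrib_left mult.commute mult.left_commute)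
  qed
  ultimately show "((\<lambda>\<theta>. (ln (1 + real (nn \<theta>) / (\<theta> * exp t)) + ln (1 + real (nn \<theta>) / \<theta>))
      / (\<theta> * ln (real (nn \<theta>) / \<theta>))) \<longlongrightarrow> 0) at_top"
    by (simp add: tendsto_cong)
qed

theorem theorem4p1:
  shows
  "(\<forall>(n::nat) (t::real). n \<ge> 1 \<longrightarrow>
      ((\<lambda>\<theta>. ln (mgf_K n \<theta> (ln \<theta> * t)) / ln \<theta>) \<longlongrightarrow> Lambda1 n t) at_top)
   \<and>
   (\<forall>(nn::real \<Rightarrow> nat) (t::real).
      filterlim nn at_top at_top \<and> filterlim (\<lambda>\<theta>. \<theta> / real (nn \<theta>)) at_top at_top \<longrightarrow>
      ((\<lambda>\<theta>. ln (mgf_K (nn \<theta>) \<theta> (ln (\<theta> / real (nn \<theta>)) * t))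
              / (real (nn \<theta>) * ln (\<theta> / real (nn \<theta>)))) \<longlongrightarrow> Lambda2 t) at_top)
   \<and>
   (\<forall>(nn::real \<Rightarrow> nat) (c::real) (t::real).
      c > 0 \<and> filterlim nn at_top at_top \<and> ((\<lambda>\<theta>. \<theta> / real (nn \<theta>)) \<longlongrightarrow> c) at_top \<longrightarrow>
      ((\<lambda>\<theta>. ln (mgf_K (nn \<theta>) \<theta> (\<theta> / real (nn \<theta>) * t)) / \<theta>) \<longlongrightarrow> Lambda3 c t) at_top)
   \<and>
   (\<forall>(nn::real \<Rightarrow> nat) (t::real).
      filterlim nn at_top at_top \<and> ((\<lambda>\<theta>. \<theta> / real (nn \<theta>)) \<longlongrightarrow> 0) at_top \<longrightarrow>
      ((\<lambda>\<theta>. ln (mgf_K (nn \<theta>) \<theta> t) / (\<theta> * ln (real (nn \<theta>) / \<theta>))) \<longlongrightarrow> Lambda4 t) at_top)"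
  by (intro conjI allI impI; (elim conjE)?)
    (rule ln_mgf_K_tendsto_case_A ln_mgf_K_tendsto_case_B ln_mgf_K_tendsto_case_C
      ln_mgf_K_tendsto_case_D; assumption)+

end
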